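(* Let $\rho_{AB}$ be a density matrix on two qubits $\mathcal H_A\otimes\mathcal H_B=\mathbb C^2\otimes\mathbb C^2$ such that $\langle \psi|\rho_{AB}|\psi\rangle\geq 1-\epsilon$, where $|\psi\rangle_{AB}=\frac{1}{\sqrt2}(|00\rangle+|11\rangle)$ and $\epsilon\ge 0$. Then $\mu(\rho_{AB})\geq 1-2\epsilon$.
   Context: For a bipartite density matrix $\rho_{AB}$ on $\mathcal H_A\otimes\mathcal H_B$ with reduced states $\rho_A=\mathrm{tr}_B\rho_{AB}$, $\rho_B=\mathrm{tr}_A\rho_{AB}$, the maximal correlation is $\mu(\rho_{AB})=\max |\mathrm{tr}(\rho_{AB}\, X_A\otimes Y_B^\dagger)|$, the maximum over $X_A\in\mathbf L(\mathcal H_A)$, $Y_B\in\mathbf L(\mathcal H_B)$ subject to $\mathrm{tr}(\rho_A X_A)=\mathrm{tr}(\rho_B Y_B)=0$ and $\mathrm{tr}(\rho_A X_AX_A^\dagger)=\mathrm{tr}(\rho_B Y_BY_B^\dagger)=1$. *)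

theory Defs
  imports Complex_Main
begin

text \<open>A qubit is indexed by \<open>bool\<close> (False = |0>, True = |1>), two qubits by \<open>bool \<times> bool\<close>.\<close>

type_synonym 'i cmat = "'i \<Rightarrow> 'i \<Rightarrow> complex"

definition mtrace :: "('i::finite) cmat \<Rightarrow> complex" where
  "mtrace M = (\<Sum>i\<in>UNIV. M i i)"

definition mmult :: "('i::finite) cmat \<Rightarrow> 'i cmat \<Rightarrow> 'i cmat" where
  "mmult M N = (\<lambda>i k. \<Sum>j\<in>UNIV. M i j * N j k)"

definition madj :: "'i cmat \<Rightarrow> 'i cmat" where
  "madj M = (\<lambda>i j. cnj (M j i))"

definition tensor :: "'a cmat \<Rightarrow> 'b cmat \<Rightarrow> ('a \<times> 'b) cmat" where
  "tensor X Y = (\<lambda>(a, b) (a', b'). X a a' * Y b b')"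

definition ptrace_B :: "(('a::finite) \<times> ('b::finite)) cmat \<Rightarrow> 'a cmat" where
  "ptrace_B \<rho> = (\<lambda>a a'. \<Sum>b\<in>UNIV. \<rho> (a, b) (a', b))"

definition ptrace_A :: "(('a::finite) \<times> ('b::finite)) cmat \<Rightarrow> 'b cmat" where
  "ptrace_A \<rho> = (\<lambda>b b'. \<Sum>a\<in>UNIV. \<rho> (a, b) (a, b'))"

definition hermitian :: "'i cmat \<Rightarrow> bool" where
  "hermitian M \<longleftrightarrow> (\<forall>i j. M i j = cnj (M j i))"

definition qform :: "('i::finite) cmat \<Rightarrow> ('i \<Rightarrow> complex) \<Rightarrow> complex" where
  "qform M v = (\<Sum>i\<in>UNIV. \<Sum>j\<in>UNIV. cnj (v i) * M i j * v j)"

definition psd :: "('i::finite) cmat \<Rightarrow> bool" where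
  "psd M \<longleftrightarrow> hermitian M \<and> (\<forall>v. 0 \<le> Re (qform M v))"

definition density_matrix :: "('i::finite) cmat \<Rightarrow> bool" where
  "density_matrix \<rho> \<longleftrightarrow> psd \<rho> \<and> mtrace \<rho> = 1"

definition max_corr :: "(('a::finite) \<times> ('b::finite)) cmat \<Rightarrow> real" where
  "max_corr \<rho> = Sup {cmod (mtrace (mmult \<rho> (tensor X (madj Y)))) | X Y.
       mtrace (mmult (ptrace_B \<rho>) X) = 0 \<and> mtrace (mmult (ptrace_A \<rho>) Y) = 0 \<and>
       mtrace (mmult (ptrace_B \<rho>) (mmult X (madj X))) = 1 \<and>
       mtrace (mmult (ptrace_A \<rho>) (mmult Y (madj Y))) = 1}"

definition bell :: "bool \<times> bool \<Rightarrow> complex" where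
  "bell = (\<lambda>(a, b). if a = b then complex_of_real (1 / sqrt 2) else 0)"

end

theory Submission
  imports Defs
begin

text \<open>
  Write \<open>a, x, y, b\<close> for the diagonal entries of \<open>\<rho>\<close> at \<open>|00>, |01>, |10>, |11>\<close> and
  \<open>c = Re <00|\<rho>|11>\<close>. The fidelity with the Bell state is \<open>(a + b)/2 + c\<close>, so the hypothesis
  says \<open>2c - x - y \<ge> 1 - 2\<epsilon>\<close>. Measuring the standardized versions of the computational-basis
  projector \<open>|0><0|\<close> on both sides gives the correlation \<open>(ab - xy)/\<surd>(p\<^sub>A q\<^sub>A p\<^sub>B q\<^sub>B)\<close>, where
  \<open>(p, q)\<close> are the marginal outcome probabilities. Positivity of \<open>\<rho>\<close> gives \<open>c\<^sup>2 \<le> ab\<close>, and with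
  AM-GM and a sum-of-squares identity this correlation is at least \<open>2c - x - y\<close>. Since \<open>\<mu>\<close> is a
  supremum, one also needs every correlation to be at most 1: this is Cauchy-Schwarz for the
  positive semidefinite form \<open>tr(\<rho> M N\<^sup>\<dagger>)\<close>.
\<close>

lemma sum_UNIV_bool: "(\<Sum>i\<in>UNIV. f i) = f False + f True"
  by (simp add: UNIV_bool)

lemma sum_UNIV_prod:
  "(\<Sum>p\<in>(UNIV :: ('a::finite \<times> 'b::finite) set). f p) = (\<Sum>a\<in>UNIV. \<Sum>b\<in>UNIV. f (a, b))"
  by (simp add: sum.cartesian_product flip: UNIV_Times_UNIV)

lemma sum_if_zero: "(\<Sum>x\<in>A. if P then f x else 0) = (if P then sum f A else 0)"
  by simp

lemma cmod_square_le_of_hermitian_form_nonneg: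
  fixes w z v :: complex
  assumes "0 \<le> Re v" and form: "\<And>c. 0 \<le> Re (w - cnj c * z - c * cnj z + c * cnj c * v)"
  shows "(cmod z)\<^sup>2 \<le> Re w * Re v"
proof -
  have quad: "0 \<le> Re w - 2 * Re (cnj c * z) + (cmod c)\<^sup>2 * Re v" for c
    using form[of c] unfolding cmod_power2 by (simp add: algebra_simps power2_eq_square)
  show ?thesis
  proof (cases "Re v = 0")
    case True
    have re: "Re (cnj (of_real t * z) * z) = t * (cmod z)\<^sup>2" for t
      unfolding cmod_power2 by (simp add: power2_eq_square algebra_simps)
    then have le: "2 * t * (cmod z)\<^sup>2 \<le> Re w" for t
      using quad[of "of_real t * z"] True unfolding re by (simp add: mult.assoc)
    have "z = 0"
    proof (rule ccontr)
      assume "z \<noteq> 0"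
      then have "2 * ((\<bar>Re w\<bar> + 1) / (2 * (cmod z)\<^sup>2)) * (cmod z)\<^sup>2 = \<bar>Re w\<bar> + 1"
        by simp
      with le show False by (metis abs_ge_self add_le_same_cancel1 not_one_le_zero order_trans)
    qed
    then show ?thesis using True by simp
  next
    case False
    then have "Re v > 0" using assms(1) by simp
    have "0 \<le> Re w - 2 * Re (cnj (z / of_real (Re v)) * z) + (cmod (z / of_real (Re v)))\<^sup>2 * Re v"
      by (rule quad)
    also have "\<dots> = Re w - (cmod z)\<^sup>2 / Re v"
      using \<open>Re v > 0\<close>
      by (simp add: norm_divide mult.commute[of "cnj z"] complex_norm_square[symmetric] field_simps power2_eq_square)
    finally show ?thesis using \<open>Re v > 0\<close> by (simp add: field_simps)
  qed
qed

section \<open>Positive semidefinite matrices\<close>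

lemma hermitian_diag_real: "hermitian M \<Longrightarrow> M i i = of_real (Re (M i i))"
  unfolding hermitian_def by (metis Reals_cnj_iff of_real_Re)

lemma qform_indicator: "qform M (\<lambda>k. if k = i then 1 else 0) = M i i"
  unfolding qform_def by (simp add: if_distrib[of "\<lambda>u. u * _"] if_distrib[of "\<lambda>u. _ * u"] if_distrib[of cnj] cong: if_cong)

lemma psd_diag_nonneg: "psd M \<Longrightarrow> 0 \<le> Re (M i i)"
  unfolding psd_def by (metis qform_indicator)

lemma qform_indicator_diff:
  "qform M (\<lambda>k. (if k = i then 1 else 0) - c * (if k = j then 1 else 0))
     = M i i - cnj c * M j i - c * M i j + c * cnj c * M j j"
  unfolding qform_def
  by (simp add: algebra_simps sum.distrib sum_subtractf sum_if_zero if_distrib[of "\<lambda>u. u * _"]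
      if_distrib[of "\<lambda>u. _ * u"] if_distrib[of cnj] cong: if_cong)

lemma psd_entry_cmod_square_le:
  assumes "psd M"
  shows "(cmod (M i j))\<^sup>2 \<le> Re (M i i) * Re (M j j)"
proof -
  have "(cmod (M i j))\<^sup>2 \<le> Re (M j j) * Re (M i i)"
  proof (rule cmod_square_le_of_hermitian_form_nonneg)
    show "0 \<le> Re (M i i)" using assms by (rule psd_diag_nonneg)
    have herm: "M j i = cnj (M i j)" using assms unfolding psd_def hermitian_def by blast
    fix c
    have "0 \<le> Re (qform M (\<lambda>k. (if k = j then 1 else 0) - c * (if k = i then 1 else 0)))"
      using assms unfolding psd_def by blast
    then show "0 \<le> Re (M j j - cnj c * M i j - c * cnj (M i j) + c * cnj c * M i i)"
      unfolding qform_indicator_diff herm .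
  qed
  then show ?thesis by (simp add: mult.commute)
qed

lemma psd_Re_entry_square_le:
  assumes "psd M"
  shows "(Re (M i j))\<^sup>2 \<le> Re (M i i) * Re (M j j)"
proof -
  have "(Re (M i j))\<^sup>2 \<le> (cmod (M i j))\<^sup>2"
    using abs_Re_le_cmod abs_le_square_iff[of "Re (M i j)" "cmod (M i j)"] by simp
  also have "\<dots> \<le> Re (M i i) * Re (M j j)"
    using assms by (rule psd_entry_cmod_square_le)
  finally show ?thesis .
qed

lemma psd_entry_eq_zero:
  assumes "psd M" "M i i = 0"
  shows "M i j = 0"
  using psd_entry_cmod_square_le[OF assms(1), of i j] assms(2) by simp

definition trace_inner :: "('i::finite) cmat \<Rightarrow> 'i cmat \<Rightarrow> 'i cmat \<Rightarrow> complex" where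
  "trace_inner \<rho> M N = mtrace (mmult \<rho> (mmult M (madj N)))"

lemma trace_inner_eq_sum:
  "trace_inner \<rho> M N = (\<Sum>i\<in>UNIV. \<Sum>j\<in>UNIV. \<Sum>k\<in>UNIV. \<rho> i j * M j k * cnj (N i k))"
  unfolding trace_inner_def mtrace_def mmult_def madj_def
  by (simp add: sum_distrib_left mult.assoc)

lemma trace_inner_diff_diff:
  "trace_inner \<rho> (\<lambda>j k. M j k - c * N j k) (\<lambda>j k. M j k - c * N j k)
     = trace_inner \<rho> M M - cnj c * trace_inner \<rho> M N - c * trace_inner \<rho> N M
       + c * cnj c * trace_inner \<rho> N N"
  unfolding trace_inner_eq_sum
  by (simp add: algebra_simps sum.distrib sum_subtractf sum_distrib_left)

lemma trace_inner_swap: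
  assumes "hermitian \<rho>"
  shows "trace_inner \<rho> N M = cnj (trace_inner \<rho> M N)"
proof -
  have cnj_entry: "cnj (\<rho> i j) = \<rho> j i" for i j
    using assms unfolding hermitian_def by (metis complex_cnj_cnj)
  have "cnj (trace_inner \<rho> M N) = (\<Sum>i\<in>UNIV. \<Sum>j\<in>UNIV. \<Sum>k\<in>UNIV. \<rho> j i * N i k * cnj (M j k))"
    unfolding trace_inner_eq_sum by (simp add: cnj_sum cnj_entry mult_ac)
  also have "\<dots> = trace_inner \<rho> N M"
    unfolding trace_inner_eq_sum by (rule sum.swap)
  finally show ?thesis by simp
qed

lemma trace_inner_eq_sum_qform:
  "trace_inner \<rho> M M = (\<Sum>k\<in>UNIV. qform \<rho> (\<lambda>j. M j k))"
proof -
  have "trace_inner \<rho> M M = (\<Sum>i\<in>UNIV. \<Sum>k\<in>UNIV. \<Sum>j\<in>UNIV. \<rho> i j * M j k * cnj (M i k))"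
    unfolding trace_inner_eq_sum by (rule sum.cong[OF refl], rule sum.swap)
  also have "\<dots> = (\<Sum>k\<in>UNIV. \<Sum>i\<in>UNIV. \<Sum>j\<in>UNIV. \<rho> i j * M j k * cnj (M i k))"
    by (rule sum.swap)
  also have "\<dots> = (\<Sum>k\<in>UNIV. qform \<rho> (\<lambda>j. M j k))"
    unfolding qform_def by (intro sum.cong refl) (simp add: mult_ac)
  finally show ?thesis .
qed

lemma trace_inner_nonneg: "psd \<rho> \<Longrightarrow> 0 \<le> Re (trace_inner \<rho> M M)"
  unfolding trace_inner_eq_sum_qform psd_def by (simp add: sum_nonneg)

lemma trace_inner_cauchy_schwarz:
  assumes "psd \<rho>"
  shows "(cmod (trace_inner \<rho> M N))\<^sup>2 \<le> Re (trace_inner \<rho> M M) * Re (trace_inner \<rho> N N)"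
proof (rule cmod_square_le_of_hermitian_form_nonneg)
  show "0 \<le> Re (trace_inner \<rho> N N)"
    using assms by (rule trace_inner_nonneg)
  have herm: "hermitian \<rho>" using assms psd_def by blast
  fix c
  show "0 \<le> Re (trace_inner \<rho> M M - cnj c * trace_inner \<rho> M N - c * cnj (trace_inner \<rho> M N)
      + c * cnj c * trace_inner \<rho> N N)"
    using trace_inner_nonneg[OF assms, of "\<lambda>j k. M j k - c * N j k"]
    unfolding trace_inner_diff_diff trace_inner_swap[OF herm, of N M] .
qed

section \<open>Partial traces and local operators\<close>

lemma mtrace_ptrace_B: "mtrace (ptrace_B \<rho>) = mtrace \<rho>"
  unfolding mtrace_def ptrace_B_def sum_UNIV_prod ..

lemma mtrace_ptrace_A: "mtrace (ptrace_A \<rho>) = mtrace \<rho>"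
  unfolding mtrace_def ptrace_A_def sum_UNIV_prod by (rule sum.swap)

lemma hermitian_ptrace_B: "hermitian \<rho> \<Longrightarrow> hermitian (ptrace_B \<rho>)"
  unfolding hermitian_def ptrace_B_def cnj_sum by (intro allI sum.cong refl) blast

lemma hermitian_ptrace_A: "hermitian \<rho> \<Longrightarrow> hermitian (ptrace_A \<rho>)"
  unfolding hermitian_def ptrace_A_def cnj_sum by (intro allI sum.cong refl) blast

lemma qform_ptrace_B:
  "qform (ptrace_B \<rho>) v = (\<Sum>b\<in>UNIV. qform \<rho> (\<lambda>(a, b'). if b' = b then v a else 0))"
proof -
  have "qform (ptrace_B \<rho>) v = (\<Sum>a\<in>UNIV. \<Sum>b\<in>UNIV. \<Sum>a'\<in>UNIV. cnj (v a) * \<rho> (a, b) (a', b) * v a')"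
    unfolding qform_def ptrace_B_def
    by (simp add: sum_distrib_left sum_distrib_right) (intro sum.cong refl, rule sum.swap)
  also have "\<dots> = (\<Sum>b\<in>UNIV. \<Sum>a\<in>UNIV. \<Sum>a'\<in>UNIV. cnj (v a) * \<rho> (a, b) (a', b) * v a')"
    by (rule sum.swap)
  also have "\<dots> = (\<Sum>b\<in>UNIV. qform \<rho> (\<lambda>(a, b'). if b' = b then v a else 0))"
    unfolding qform_def sum_UNIV_prod
    by (simp add: sum_if_zero if_distrib[of "\<lambda>u. u * _"] if_distrib[of "\<lambda>u. _ * u"] if_distrib[of cnj] cong: if_cong)
  finally show ?thesis .
qed

lemma qform_ptrace_A:
  "qform (ptrace_A \<rho>) v = (\<Sum>a\<in>UNIV. qform \<rho> (\<lambda>(a', b). if a' = a then v b else 0))"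
proof -
  have "qform (ptrace_A \<rho>) v = (\<Sum>b\<in>UNIV. \<Sum>a\<in>UNIV. \<Sum>b'\<in>UNIV. cnj (v b) * \<rho> (a, b) (a, b') * v b')"
    unfolding qform_def ptrace_A_def
    by (simp add: sum_distrib_left sum_distrib_right) (intro sum.cong refl, rule sum.swap)
  also have "\<dots> = (\<Sum>a\<in>UNIV. \<Sum>b\<in>UNIV. \<Sum>b'\<in>UNIV. cnj (v b) * \<rho> (a, b) (a, b') * v b')"
    by (rule sum.swap)
  also have "\<dots> = (\<Sum>a\<in>UNIV. qform \<rho> (\<lambda>(a', b). if a' = a then v b else 0))"
    unfolding qform_def sum_UNIV_prod
    by (simp add: sum_if_zero if_distrib[of "\<lambda>u. u * _"] if_distrib[of "\<lambda>u. _ * u"] if_distrib[of cnj] cong: if_cong)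
  finally show ?thesis .
qed

lemma psd_ptrace_B: "psd \<rho> \<Longrightarrow> psd (ptrace_B \<rho>)"
  unfolding psd_def qform_ptrace_B by (simp add: hermitian_ptrace_B sum_nonneg)

lemma psd_ptrace_A: "psd \<rho> \<Longrightarrow> psd (ptrace_A \<rho>)"
  unfolding psd_def qform_ptrace_A by (simp add: hermitian_ptrace_A sum_nonneg)

lemma density_matrix_ptrace_B: "density_matrix \<rho> \<Longrightarrow> density_matrix (ptrace_B \<rho>)"
  unfolding density_matrix_def by (simp add: psd_ptrace_B mtrace_ptrace_B)

lemma density_matrix_ptrace_A: "density_matrix \<rho> \<Longrightarrow> density_matrix (ptrace_A \<rho>)"
  unfolding density_matrix_def by (simp add: psd_ptrace_A mtrace_ptrace_A)

definition mdiag :: "('i \<Rightarrow> complex) \<Rightarrow> 'i cmat" where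
  "mdiag f = (\<lambda>i j. if i = j then f i else 0)"

abbreviation mident :: "'i cmat" where
  "mident \<equiv> mdiag (\<lambda>_. 1)"

lemma mmult_mdiag: "mmult (mdiag f) (mdiag g) = mdiag (\<lambda>i. f i * g i)"
  by (simp add: fun_eq_iff mmult_def mdiag_def if_distrib[of "\<lambda>u. u * _"] cong: if_cong)

lemma madj_mdiag: "madj (mdiag f) = mdiag (\<lambda>i. cnj (f i))"
  by (simp add: fun_eq_iff madj_def mdiag_def)

lemma tensor_mdiag: "tensor (mdiag f) (mdiag g) = mdiag (\<lambda>(a, b). f a * g b)"
  by (auto simp: fun_eq_iff tensor_def mdiag_def)

lemma mtrace_mmult_mdiag: "mtrace (mmult \<sigma> (mdiag f)) = (\<Sum>i\<in>UNIV. \<sigma> i i * f i)"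
  unfolding mtrace_def mmult_def mdiag_def
  by (simp add: if_distrib[of "\<lambda>u. _ * u"] cong: if_cong)

lemma mmult_mident [simp]: "mmult M mident = M"
  by (simp add: fun_eq_iff mmult_def mdiag_def if_distrib[of "\<lambda>u. _ * u"] cong: if_cong)

lemma mident_mmult [simp]: "mmult mident M = M"
  by (simp add: fun_eq_iff mmult_def mdiag_def if_distrib[of "\<lambda>u. u * _"] cong: if_cong)

lemma madj_mident [simp]: "madj mident = mident"
  by (simp add: madj_mdiag)

lemma mmult_tensor: "mmult (tensor A B) (tensor C D) = tensor (mmult A C) (mmult B D)"
  by (auto simp: fun_eq_iff mmult_def tensor_def sum_UNIV_prod sum_product mult_ac)

lemma madj_tensor: "madj (tensor A B) = tensor (madj A) (madj B)"
  by (auto simp: fun_eq_iff madj_def tensor_def)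

lemma mtrace_mmult_tensor_mident_right:
  "mtrace (mmult \<rho> (tensor A mident)) = mtrace (mmult (ptrace_B \<rho>) A)"
  unfolding mtrace_def mmult_def tensor_def mdiag_def ptrace_B_def sum_UNIV_prod
  by (simp add: if_distrib[of "\<lambda>u. _ * u"] sum_distrib_right cong: if_cong)
    (rule sum.cong[OF refl], rule sum.swap)

lemma mtrace_mmult_tensor_mident_left:
  "mtrace (mmult \<rho> (tensor mident B)) = mtrace (mmult (ptrace_A \<rho>) B)"
proof -
  have "mtrace (mmult \<rho> (tensor mident B)) = (\<Sum>a\<in>UNIV. \<Sum>b\<in>UNIV. \<Sum>b'\<in>UNIV. \<rho> (a, b) (a, b') * B b' b)"
    unfolding mtrace_def mmult_def tensor_def mdiag_def sum_UNIV_prod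
    by (simp add: if_distrib[of "\<lambda>u. _ * u"] cong: if_cong)
      (intro sum.cong refl, subst sum.swap,
       simp add: if_distrib[of "\<lambda>u. u * _"] if_distrib[of "\<lambda>u. _ * u"] cong: if_cong)
  also have "\<dots> = (\<Sum>b\<in>UNIV. \<Sum>b'\<in>UNIV. \<Sum>a\<in>UNIV. \<rho> (a, b) (a, b') * B b' b)"
    by (subst sum.swap) (intro sum.cong refl, rule sum.swap)
  also have "\<dots> = mtrace (mmult (ptrace_A \<rho>) B)"
    unfolding mtrace_def mmult_def ptrace_A_def by (simp add: sum_distrib_right)
  finally show ?thesis .
qed

section \<open>Standardized observables and maximal correlation\<close>

definition standardized :: "('i::finite) cmat \<Rightarrow> 'i cmat \<Rightarrow> bool" where
  "standardized \<sigma> X \<longleftrightarrow> mtrace (mmult \<sigma> X) = 0 \<and> mtrace (mmult \<sigma> (mmult X (madj X))) = 1"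

lemma max_corr_eq_Sup_standardized:
  "max_corr \<rho> = Sup {cmod (mtrace (mmult \<rho> (tensor X (madj Y)))) | X Y.
     standardized (ptrace_B \<rho>) X \<and> standardized (ptrace_A \<rho>) Y}"
  unfolding max_corr_def standardized_def by meson

lemma correlation_le_one:
  assumes "psd \<rho>" "standardized (ptrace_B \<rho>) X" "standardized (ptrace_A \<rho>) Y"
  shows "cmod (mtrace (mmult \<rho> (tensor X (madj Y)))) \<le> 1"
proof -
  have corr: "mtrace (mmult \<rho> (tensor X (madj Y))) = trace_inner \<rho> (tensor X mident) (tensor mident Y)"
    unfolding trace_inner_def madj_tensor mmult_tensor by simp
  have "trace_inner \<rho> (tensor X mident) (tensor X mident) = 1"
    using assms(2) unfolding standardized_def trace_inner_def madj_tensor mmult_tensor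
    by (simp add: mtrace_mmult_tensor_mident_right)
  moreover have "trace_inner \<rho> (tensor mident Y) (tensor mident Y) = 1"
    using assms(3) unfolding standardized_def trace_inner_def madj_tensor mmult_tensor
    by (simp add: mtrace_mmult_tensor_mident_left)
  ultimately have "(cmod (mtrace (mmult \<rho> (tensor X (madj Y)))))\<^sup>2 \<le> 1"
    using trace_inner_cauchy_schwarz[OF assms(1), of "tensor X mident" "tensor mident Y"]
    unfolding corr by simp
  then show ?thesis by (simp add: power_le_one_iff)
qed

lemma max_corr_ge:
  assumes "psd \<rho>" "standardized (ptrace_B \<rho>) X" "standardized (ptrace_A \<rho>) Y"
    and "r \<le> cmod (mtrace (mmult \<rho> (tensor X (madj Y))))"
  shows "r \<le> max_corr \<rho>"
  unfolding max_corr_eq_Sup_standardized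
proof (rule cSup_upper2)
  show "cmod (mtrace (mmult \<rho> (tensor X (madj Y)))) \<in> {cmod (mtrace (mmult \<rho> (tensor X (madj Y)))) | X Y.
     standardized (ptrace_B \<rho>) X \<and> standardized (ptrace_A \<rho>) Y}"
    using assms(2,3) by blast
  show "bdd_above {cmod (mtrace (mmult \<rho> (tensor X (madj Y)))) | X Y.
     standardized (ptrace_B \<rho>) X \<and> standardized (ptrace_A \<rho>) Y}"
    using correlation_le_one[OF assms(1)] by (intro bdd_aboveI[where M = 1]) blast
qed (fact assms(4))

lemma standardized_matrix_unit:
  assumes "psd \<sigma>" "\<sigma> i i = 0" "\<sigma> j j = 1"
  shows "standardized \<sigma> (\<lambda>k l. if k = j then if l = i then 1 else 0 else 0)"
  using psd_entry_eq_zero[OF assms(1,2), of j] assms(3)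
  unfolding standardized_def mtrace_def mmult_def madj_def
  by (simp add: if_distrib[of "\<lambda>u. u * _"] if_distrib[of "\<lambda>u. _ * u"] if_distrib[of cnj]
      sum_if_zero cong: if_cong)

section \<open>Two qubits\<close>

text \<open>The indicator of outcome \<open>False\<close>, centred and normalised for the outcome distribution
  \<open>(p, 1 - p)\<close>.\<close>
definition std_obs :: "real \<Rightarrow> bool cmat" where
  "std_obs p = mdiag (\<lambda>i. of_real ((if i then - p else 1 - p) / sqrt (p * (1 - p))))"

lemma standardized_std_obs:
  assumes "mtrace \<sigma> = 1" "\<sigma> False False = of_real p" "0 < p" "p < 1"
  shows "standardized \<sigma> (std_obs p)"
proof -
  define s where "s = sqrt (p * (1 - p))"
  have s: "s\<^sup>2 = p * (1 - p)" "s \<noteq> 0"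
    using assms(3,4) unfolding s_def by simp_all
  have q: "\<sigma> True True = of_real (1 - p)"
    using assms(1,2) unfolding mtrace_def sum_UNIV_bool by (simp add: algebra_simps)
  have "mtrace (mmult \<sigma> (std_obs p)) = of_real (p * ((1 - p) / s) + (1 - p) * (- p / s))"
    unfolding std_obs_def mtrace_mmult_mdiag sum_UNIV_bool assms(2) q s_def by simp
  also have "\<dots> = 0"
    by (simp add: field_simps)
  finally have centered: "mtrace (mmult \<sigma> (std_obs p)) = 0" .
  have "mtrace (mmult \<sigma> (mmult (std_obs p) (madj (std_obs p))))
      = of_real (p * ((1 - p) / s)\<^sup>2 + (1 - p) * (- p / s)\<^sup>2)"
    unfolding std_obs_def madj_mdiag mmult_mdiag mtrace_mmult_mdiag sum_UNIV_bool assms(2) q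
      s_def[symmetric]
    by (simp add: power2_eq_square)
  also have "\<dots> = 1"
  proof -
    have "p * ((1 - p) / s)\<^sup>2 + (1 - p) * (- p / s)\<^sup>2 = 1"
      using s by (simp add: power_divide field_simps) (simp add: algebra_simps power2_eq_square)
    then show ?thesis by simp
  qed
  finally show ?thesis
    using centered unfolding standardized_def by simp
qed

lemma qubit_standardized_exists:
  fixes \<sigma> :: "bool cmat"
  assumes "density_matrix \<sigma>"
  shows "\<exists>X. standardized \<sigma> X"
proof -
  have psd: "psd \<sigma>" and tr: "\<sigma> False False + \<sigma> True True = 1"
    using assms unfolding density_matrix_def mtrace_def sum_UNIV_bool by auto
  define p where "p = Re (\<sigma> False False)"
  have p: "\<sigma> False False = of_real p" and q: "\<sigma> True True = of_real (1 - p)"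
    using hermitian_diag_real[of \<sigma>] psd tr unfolding p_def psd_def
    by (metis, metis add_diff_cancel_left' of_real_1 of_real_diff)
  have "0 \<le> p" "0 \<le> 1 - p"
    using psd_diag_nonneg[OF psd, of False] psd_diag_nonneg[OF psd, of True] p q by simp_all
  then consider "p = 0" | "p = 1" | "0 < p" "p < 1" by linarith
  then show ?thesis
  proof cases
    case 1
    then show ?thesis using standardized_matrix_unit[OF psd, of False True] p q by auto
  next
    case 2
    then show ?thesis using standardized_matrix_unit[OF psd, of True False] p q by auto
  next
    case 3
    then show ?thesis using standardized_std_obs[of \<sigma> p] p assms density_matrix_def by blast
  qed
qed

lemma two_qubit_diagonal_inequality:
  fixes a b x y c :: real
  assumes "0 \<le> a" "0 \<le> b" "0 \<le> x" "0 \<le> y" "a + b + x + y = 1"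
    and "c\<^sup>2 \<le> a * b" "x + y \<le> 2 * c"
  shows "(2 * c - x - y) * (sqrt ((a + x) * (y + b)) * sqrt ((a + y) * (x + b))) \<le> a * b - x * y"
proof -
  define P Q where "P = (a + x) * (y + b)" and "Q = (a + y) * (x + b)"
  define t where "t = 2 * c - x - y"
  define u e g where "u = x + y" and "e = x - y" and "g = a + b - 2 * c"
  have "sqrt P * sqrt Q \<le> (P + Q) / 2"
    unfolding real_sqrt_mult[symmetric] P_def Q_def using assms(1-4) by (intro arith_geo_mean_sqrt) simp_all
  then have amgm: "2 * (t * (sqrt P * sqrt Q)) \<le> t * (P + Q)"
    using assms(7) mult_left_mono[of "2 * (sqrt P * sqrt Q)" "P + Q" t] unfolding t_def by simp
  have "(2 * c)\<^sup>2 \<le> (a + b)\<^sup>2"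
    using assms(6) sum_power2_ge_zero[of "a - b" 0] by (simp add: power2_eq_square algebra_simps)
  then have g: "0 \<le> g"
    unfolding g_def using assms(1,2) abs_le_square_iff[of "2 * c" "a + b"] by simp
  have "4 * (a * b - x * y) - 2 * (t * (P + Q))
      = (g + 2 * u) * (4 * a * b - 4 * c * c) + e\<^sup>2 * (1 - u + 2 * c) + g * (1 - g - 2 * u)\<^sup>2"
    using assms(5) unfolding P_def Q_def t_def u_def e_def g_def by algebra
  moreover have "0 \<le> (g + 2 * u) * (4 * a * b - 4 * c * c)"
    using g assms(3,4,6) unfolding u_def by (simp add: power2_eq_square)
  moreover have "0 \<le> e\<^sup>2 * (1 - u + 2 * c)"
    using assms unfolding u_def by simp
  moreover have "0 \<le> g * (1 - g - 2 * u)\<^sup>2"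
    using g by simp
  ultimately have "t * (P + Q) \<le> 2 * (a * b - x * y)"
    by linarith
  then have "t * (sqrt P * sqrt Q) \<le> a * b - x * y"
    using amgm by argo
  then show ?thesis
    unfolding t_def P_def Q_def .
qed

lemma mtrace_two_qubit:
  fixes \<rho> :: "(bool \<times> bool) cmat"
  shows "mtrace \<rho> = \<rho> (False, False) (False, False) + \<rho> (False, True) (False, True)
    + \<rho> (True, False) (True, False) + \<rho> (True, True) (True, True)"
  unfolding mtrace_def sum_UNIV_prod sum_UNIV_bool by (simp add: add.assoc)

lemma correlation_std_obs:
  fixes \<rho> :: "(bool \<times> bool) cmat"
  assumes "\<rho> (False, False) (False, False) = of_real a" "\<rho> (False, True) (False, True) = of_real x"
    "\<rho> (True, False) (True, False) = of_real y" "\<rho> (True, True) (True, True) = of_real b"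
    and "0 < p" "p < 1" "0 < q" "q < 1"
  shows "mtrace (mmult \<rho> (tensor (std_obs p) (madj (std_obs q))))
    = of_real ((a * (1 - p) * (1 - q) - x * (1 - p) * q - y * p * (1 - q) + b * p * q)
        / (sqrt (p * (1 - p)) * sqrt (q * (1 - q))))"
proof -
  define s t where "s = sqrt (p * (1 - p))" and "t = sqrt (q * (1 - q))"
  have "s \<noteq> 0" "t \<noteq> 0"
    using assms(5-8) unfolding s_def t_def by simp_all
  have "mtrace (mmult \<rho> (tensor (std_obs p) (madj (std_obs q))))
      = of_real (a * ((1 - p) / s * ((1 - q) / t)) + x * ((1 - p) / s * (- q / t))
          + (y * (- p / s * ((1 - q) / t)) + b * (- p / s * (- q / t))))"
    unfolding std_obs_def madj_mdiag tensor_mdiag mtrace_mmult_mdiag sum_UNIV_prod sum_UNIV_bool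
      assms(1-4) s_def[symmetric] t_def[symmetric]
    by simp
  also have "\<dots> = of_real ((a * (1 - p) * (1 - q) - x * (1 - p) * q - y * p * (1 - q) + b * p * q) / (s * t))"
    using \<open>s \<noteq> 0\<close> \<open>t \<noteq> 0\<close> by (simp add: field_simps)
  finally show ?thesis
    unfolding s_def t_def .
qed

lemma max_corr_ge_std_obs_correlation:
  fixes \<rho> :: "(bool \<times> bool) cmat"
  assumes "density_matrix \<rho>"
    and diag: "\<rho> (False, False) (False, False) = of_real a" "\<rho> (False, True) (False, True) = of_real x"
      "\<rho> (True, False) (True, False) = of_real y" "\<rho> (True, True) (True, True) = of_real b"
    and "0 < a" "0 < b" "0 \<le> x" "0 \<le> y"
  shows "(a * b - x * y) / (sqrt ((a + x) * (y + b)) * sqrt ((a + y) * (x + b))) \<le> max_corr \<rho>"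
proof -
  have psd: "psd \<rho>" and total: "a + x + y + b = 1"
    using assms(1) unfolding density_matrix_def mtrace_two_qubit diag by (simp_all flip: of_real_add)
  have A: "density_matrix (ptrace_B \<rho>)" "ptrace_B \<rho> False False = of_real (a + x)"
    using density_matrix_ptrace_B[OF assms(1)] unfolding ptrace_B_def sum_UNIV_bool diag by simp_all
  have B: "density_matrix (ptrace_A \<rho>)" "ptrace_A \<rho> False False = of_real (a + y)"
    using density_matrix_ptrace_A[OF assms(1)] unfolding ptrace_A_def sum_UNIV_bool diag by simp_all
  have bounds: "0 < a + x" "a + x < 1" "0 < a + y" "a + y < 1"
    using assms(6-9) total by linarith+
  have std: "standardized (ptrace_B \<rho>) (std_obs (a + x))" "standardized (ptrace_A \<rho>) (std_obs (a + y))"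
    using standardized_std_obs A B bounds unfolding density_matrix_def by blast+
  have marginals: "1 - (a + x) = y + b" "1 - (a + y) = x + b"
    using total by linarith+
  have "a * (y + b) * (x + b) - x * (y + b) * (a + y) - y * (a + x) * (x + b) + b * (a + x) * (a + y)
      = a * b - x * y"
    using total by algebra
  note corr = correlation_std_obs[of \<rho> a x y b "a + x" "a + y", OF diag bounds, unfolded marginals this]
  show ?thesis
    by (rule max_corr_ge[OF psd std]) (unfold corr norm_of_real, rule abs_ge_self)
qed

lemma max_corr_nonneg:
  fixes \<rho> :: "(bool \<times> bool) cmat"
  assumes "density_matrix \<rho>"
  shows "0 \<le> max_corr \<rho>"
proof -
  obtain X Y where "standardized (ptrace_B \<rho>) X" "standardized (ptrace_A \<rho>) Y"
    using qubit_standardized_exists density_matrix_ptrace_B density_matrix_ptrace_A assms by metis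
  with assms show ?thesis
    using max_corr_ge[of \<rho> X Y 0] unfolding density_matrix_def by simp
qed

lemma max_corr_two_qubit_ge:
  fixes \<rho> :: "(bool \<times> bool) cmat"
  assumes "density_matrix \<rho>"
  shows "2 * Re (\<rho> (False, False) (True, True)) - Re (\<rho> (False, True) (False, True))
      - Re (\<rho> (True, False) (True, False)) \<le> max_corr \<rho>"
proof -
  have psd: "psd \<rho>" and herm: "hermitian \<rho>"
    using assms unfolding density_matrix_def psd_def by simp_all
  define a x y b c where "a = Re (\<rho> (False, False) (False, False))" and "x = Re (\<rho> (False, True) (False, True))"
    and "y = Re (\<rho> (True, False) (True, False))" and "b = Re (\<rho> (True, True) (True, True))"
    and "c = Re (\<rho> (False, False) (True, True))"
  have diag: "\<rho> (False, False) (False, False) = of_real a" "\<rho> (False, True) (False, True) = of_real x"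
    "\<rho> (True, False) (True, False) = of_real y" "\<rho> (True, True) (True, True) = of_real b"
    unfolding a_def x_def y_def b_def by (rule hermitian_diag_real[OF herm])+
  have nonneg: "0 \<le> a" "0 \<le> b" "0 \<le> x" "0 \<le> y"
    unfolding a_def b_def x_def y_def by (rule psd_diag_nonneg[OF psd])+
  have total: "a + b + x + y = 1"
    using assms unfolding density_matrix_def mtrace_two_qubit diag by (simp flip: of_real_add)
  have cc: "c\<^sup>2 \<le> a * b"
    unfolding a_def b_def c_def by (rule psd_Re_entry_square_le[OF psd])
  have "2 * c - x - y \<le> max_corr \<rho>"
  proof (cases "x + y < 2 * c")
    case True
    then have "0 < c\<^sup>2"
      using nonneg by simp
    then have "0 < a * b"
      using cc by linarith
    then have "0 < a" "0 < b"
      using nonneg by (auto simp: zero_less_mult_iff)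
    then have "0 < sqrt ((a + x) * (y + b)) * sqrt ((a + y) * (x + b))"
      using nonneg by simp
    then have "2 * c - x - y \<le> (a * b - x * y) / (sqrt ((a + x) * (y + b)) * sqrt ((a + y) * (x + b)))"
      using two_qubit_diagonal_inequality[OF nonneg total cc] True by (simp only: pos_le_divide_eq)
    also have "\<dots> \<le> max_corr \<rho>"
      using max_corr_ge_std_obs_correlation[OF assms diag \<open>0 < a\<close> \<open>0 < b\<close> nonneg(3,4)] .
    finally show ?thesis .
  qed (use max_corr_nonneg[OF assms] in linarith)
  then show ?thesis
    unfolding c_def x_def y_def .
qed

lemma Re_qform_bell:
  fixes \<rho> :: "(bool \<times> bool) cmat"
  assumes "hermitian \<rho>"
  shows "Re (qform \<rho> bell) = (Re (\<rho> (False, False) (False, False)) + Re (\<rho> (True, True) (True, True))) / 2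
    + Re (\<rho> (False, False) (True, True))"
proof -
  have half: "cnj (of_real (1 / sqrt 2)) * z * of_real (1 / sqrt 2) = z / 2" for z
    by (simp add: field_simps flip: of_real_mult)
  have "Re (\<rho> (True, True) (False, False)) = Re (\<rho> (False, False) (True, True))"
    using assms unfolding hermitian_def by (metis cnj.sel(1))
  then show ?thesis
    unfolding qform_def bell_def sum_UNIV_prod sum_UNIV_bool by (simp add: half)
qed

theorem lemma1:
  fixes \<rho> :: "(bool \<times> bool) cmat" and \<epsilon> :: real
  assumes "density_matrix \<rho>"
    and "\<epsilon> \<ge> 0"
    and "Re (qform \<rho> bell) \<ge> 1 - \<epsilon>"
  shows "max_corr \<rho> \<ge> 1 - 2 * \<epsilon>"
proof -
  have "hermitian \<rho>" and "Re (mtrace \<rho>) = 1"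
    using assms(1) unfolding density_matrix_def psd_def by simp_all
  then have "1 - 2 * \<epsilon> \<le> 2 * Re (\<rho> (False, False) (True, True)) - Re (\<rho> (False, True) (False, True))
      - Re (\<rho> (True, False) (True, False))"
    using assms(3) unfolding Re_qform_bell[OF \<open>hermitian \<rho>\<close>] mtrace_two_qubit by simp argo
  also have "\<dots> \<le> max_corr \<rho>"
    using assms(1) by (rule max_corr_two_qubit_ge)
  finally show ?thesis .
qed

end
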